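(* Let $\kappa$ be an infinite cardinal and let $X$ be a crowded Hausdorff Baire space which is $\omega_1$-expandable and satisfies $dis^*(X)\leq\kappa$. If $A\subseteq X$ and $|A|\leq\kappa$, then $|\overline{A}|\leq\kappa$.
   Context: All spaces are Hausdorff. A space is crowded if it has no isolated points. $dis^*(X)$ is the least number of closed discrete subsets needed to cover $X$. For a collection $\mathcal{G}$ of subsets of $X$, $ord(x,\mathcal{G})=|\{G\in\mathcal{G}:x\in G\}|$. For a cardinal $\lambda$, $X$ is $\lambda$-expandable if for every closed discrete set $D\subseteq X$ there is a family $\mathcal{G}=\{U_d: d\in D\}$ of open sets with $U_d\cap D=\{d\}$ for each $d\in D$ and $ord(x,\mathcal{G})\leq\lambda$ for every $x\in X$. *)

theory Defs
  imports "HOL-Analysis.Analysis"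
begin

definition crowded_space :: "'a topology \<Rightarrow> bool" where
  "crowded_space X \<longleftrightarrow> (\<forall>x\<in>topspace X. \<not> openin X {x})"

definition baire_space :: "'a topology \<Rightarrow> bool" where
  "baire_space X \<longleftrightarrow>
     (\<forall>\<U>. countable \<U> \<and> (\<forall>U\<in>\<U>. openin X U \<and> X closure_of U = topspace X)
        \<longrightarrow> X closure_of (topspace X \<inter> \<Inter>\<U>) = topspace X)"

definition closed_discrete_in :: "'a topology \<Rightarrow> 'a set \<Rightarrow> bool" where
  "closed_discrete_in X D \<longleftrightarrow> closedin X D \<and> subtopology X D = discrete_topology D"

definition dis_star_le :: "'a topology \<Rightarrow> 'b set \<Rightarrow> bool" where
  "dis_star_le X K \<longleftrightarrow>
     (\<exists>\<F>. \<F> \<lesssim> K \<and> \<Union>\<F> = topspace X \<and> (\<forall>D\<in>\<F>. closed_discrete_in X D))"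

definition ord_fam :: "'a \<Rightarrow> 'a set \<Rightarrow> ('a \<Rightarrow> 'a set) \<Rightarrow> 'a set" where
  "ord_fam x D U = {d\<in>D. x \<in> U d}"

definition omega1_expandable :: "'a topology \<Rightarrow> bool" where
  "omega1_expandable X \<longleftrightarrow>
     (\<forall>D. closed_discrete_in X D \<longrightarrow>
        (\<exists>U. (\<forall>d\<in>D. openin X (U d) \<and> U d \<inter> D = {d}) \<and>
             (\<forall>x\<in>topspace X. ordLeq3 (card_of (ord_fam x D U)) (cardSuc natLeq))))"

end

theory Submission
  imports Defs "HOL-Library.Countable_Set_Type"
begin

(*
  Fix a cover F of X by at most |K| closed discrete sets.
  If K is countable, the complements of the members of F are countably many
  dense open sets (a closed discrete set in a crowded space has empty
  interior) with empty intersection; by the Baire property X is empty.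
  If K is uncountable, then omega_1 <= |K|, and it suffices to bound every
  trace E = D \<inter> cl(A), D \<in> F, by |K|, since cl(A) is the union of at
  most |K| such traces.  E is closed discrete, so omega_1-expandability gives
  open sets U d (d \<in> E) separating the points of E; each U d meets A, hence
  E is covered by the sets ord(a) = {d. a \<in> U d} for a \<in> A, which are at
  most |K| many and each of size at most omega_1 <= |K|.
*)

unbundle cardinal_syntax

lemma lepoll_iff_card_of_ordLeq: "A \<lesssim> B \<longleftrightarrow> |A| \<le>o |B|"
  unfolding lepoll_def by (rule card_of_ordLeq)

lemma closed_discrete_in_subset:
  assumes "closed_discrete_in X D" "closedin X E" "E \<subseteq> D"
  shows "closed_discrete_in X E"
proof -
  have "subtopology X E = subtopology (subtopology X D) E"
    using assms(3) by (simp add: subtopology_subtopology inf_absorb2)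
  also have "\<dots> = discrete_topology E"
    using assms(1,3) unfolding closed_discrete_in_def
    by (simp add: subtopology_discrete_topology inf_absorb2)
  finally show ?thesis
    using assms(2) unfolding closed_discrete_in_def by simp
qed

text \<open>In a crowded space a closed discrete set is nowhere dense: a nonempty open
  subset of it would contain an isolated point of the whole space.\<close>
lemma closed_discrete_in_interior_empty:
  assumes "crowded_space X" "closed_discrete_in X D"
  shows "X interior_of D = {}"
proof (rule ccontr)
  let ?V = "X interior_of D"
  assume "?V \<noteq> {}"
  then obtain x where x: "x \<in> ?V" by blast
  have V: "openin X ?V" "?V \<subseteq> D" by (auto simp: interior_of_subset)
  have "openin (subtopology X D) {x}"
    using assms(2) x V unfolding closed_discrete_in_def by auto
  then obtain W where W: "openin X W" "{x} = W \<inter> D"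
    by (auto simp: openin_subtopology)
  have "?V \<inter> W = {x}" "openin X (?V \<inter> W)" using W V x by auto
  moreover have "x \<in> topspace X" using V(1) x openin_subset by blast
  ultimately show False
    using assms(1) unfolding crowded_space_def by metis
qed

text \<open>A crowded Baire space covered by countably many closed discrete sets is empty:
  their complements are dense open sets with empty intersection.\<close>
lemma baire_countable_closed_discrete_cover_empty:
  assumes "crowded_space X" "baire_space X" "countable \<F>"
    and "\<Union>\<F> = topspace X" "\<And>D. D \<in> \<F> \<Longrightarrow> closed_discrete_in X D"
  shows "topspace X = {}"
proof -
  define \<U> where "\<U> = (\<lambda>D. topspace X - D) ` \<F>"
  have "openin X U \<and> X closure_of U = topspace X" if "U \<in> \<U>" for U
  proof -
    obtain D where D: "D \<in> \<F>" "U = topspace X - D"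
      using \<open>U \<in> \<U>\<close> unfolding \<U>_def by blast
    have "closed_discrete_in X D" using assms(5) D(1) .
    then have "closedin X D" "X interior_of D = {}"
      using closed_discrete_in_interior_empty[OF assms(1)]
      unfolding closed_discrete_in_def by auto
    then show ?thesis using D(2) by (auto simp: closure_of_complement)
  qed
  moreover have "countable \<U>" using assms(3) unfolding \<U>_def by simp
  ultimately have "X closure_of (topspace X \<inter> \<Inter>\<U>) = topspace X"
    using assms(2) unfolding baire_space_def by blast
  moreover have "topspace X \<inter> \<Inter>\<U> = {}"
    using assms(4) unfolding \<U>_def by blast
  ultimately show ?thesis by simp
qed

lemma lepoll_by_small_traces:
  assumes "infinite K" "\<F> \<lesssim> K" "S \<subseteq> \<Union>\<F>" "\<And>D. D \<in> \<F> \<Longrightarrow> D \<inter> S \<lesssim> K"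
  shows "S \<lesssim> K"
proof -
  have "|\<Union>D\<in>\<F>. D \<inter> S| \<le>o |K|"
    by (rule card_of_UNION_ordLeq_infinite[OF assms(1)])
      (use assms(2,4) in \<open>auto simp: lepoll_iff_card_of_ordLeq\<close>)
  moreover have "(\<Union>D\<in>\<F>. D \<inter> S) = S" using assms(3) by blast
  ultimately show ?thesis by (simp add: lepoll_iff_card_of_ordLeq)
qed

text \<open>Counting lemma behind expandability: if the points d of E \<subseteq> cl(A) have open
  neighbourhoods U d whose order at each point of A is at most |K|, then E is
  covered by the |A| many order sets of points of A, so |E| \<le> |K|.\<close>
lemma lepoll_of_expansion_in_closure:
  assumes "infinite K" "A \<lesssim> K" "E \<subseteq> X closure_of A"
    and "\<And>d. d \<in> E \<Longrightarrow> openin X (U d) \<and> d \<in> U d"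
    and "\<And>a. a \<in> A \<Longrightarrow> ord_fam a E U \<lesssim> K"
  shows "E \<lesssim> K"
proof -
  have "\<exists>a\<in>A. a \<in> U d" if "d \<in> E" for d
    using assms(3) assms(4)[of d] that unfolding closure_of_def by blast
  then have "E \<subseteq> (\<Union>a\<in>A. ord_fam a E U)" unfolding ord_fam_def by blast
  moreover have "|\<Union>a\<in>A. ord_fam a E U| \<le>o |K|"
    by (rule card_of_UNION_ordLeq_infinite[OF assms(1)])
      (use assms(2,5) in \<open>auto simp: lepoll_iff_card_of_ordLeq\<close>)
  ultimately show ?thesis
    using lepoll_trans[OF subset_imp_lepoll] lepoll_iff_card_of_ordLeq by blast
qed

lemma uncountable_imp_omega1_ordLeq:
  assumes "\<not> countable K"
  shows "cardSuc natLeq \<le>o |K|"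
proof -
  have "\<not> |K| \<le>o natLeq" using assms countable_card_le_natLeq by blast
  then have "natLeq <o |K|"
    by (simp add: not_ordLeq_iff_ordLess[OF natLeq_Well_order card_of_Well_order])
  then show ?thesis
    by (rule cardSuc_least[OF natLeq_Card_order card_of_Card_order])
qed

lemma closed_discrete_in_closure_lepoll:
  assumes "infinite K" "cardSuc natLeq \<le>o |K|" "omega1_expandable X"
    and "A \<subseteq> topspace X" "A \<lesssim> K"
    and "closed_discrete_in X E" "E \<subseteq> X closure_of A"
  shows "E \<lesssim> K"
proof -
  have "\<exists>U. (\<forall>d\<in>E. openin X (U d) \<and> U d \<inter> E = {d}) \<and>
             (\<forall>x\<in>topspace X. |ord_fam x E U| \<le>o cardSuc natLeq)"
    using assms(3,6) unfolding omega1_expandable_def by (elim allE impE)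
  then obtain U where U: "\<forall>d\<in>E. openin X (U d) \<and> U d \<inter> E = {d}"
    and ord: "\<forall>x\<in>topspace X. |ord_fam x E U| \<le>o cardSuc natLeq"
    by (elim exE conjE)
  show ?thesis
  proof (rule lepoll_of_expansion_in_closure[OF assms(1,5,7)])
    show "openin X (U d) \<and> d \<in> U d" if "d \<in> E" for d
      using U that by blast
    show "ord_fam a E U \<lesssim> K" if "a \<in> A" for a
    proof -
      have "|ord_fam a E U| \<le>o cardSuc natLeq" using ord that assms(4) by blast
      from ordLeq_transitive[OF this assms(2)] show ?thesis
        by (simp add: lepoll_iff_card_of_ordLeq)
    qed
  qed
qed

theorem mainTheorem5:
  fixes X :: "'a topology" and K :: "'b set" and A :: "'a set"
  assumes "infinite K"
    and "Hausdorff_space X"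
    and "crowded_space X"
    and "baire_space X"
    and "omega1_expandable X"
    and "dis_star_le X K"
    and "A \<subseteq> topspace X"
    and "A \<lesssim> K"
  shows "X closure_of A \<lesssim> K"
proof -
  obtain \<F> where F: "\<F> \<lesssim> K" "\<Union>\<F> = topspace X"
    and cd: "\<And>D. D \<in> \<F> \<Longrightarrow> closed_discrete_in X D"
    using assms(6) unfolding dis_star_le_def by blast
  show ?thesis
  proof (cases "countable K")
    case True
    then have "countable \<F>" using F(1) by (rule countable_lepoll)
    then have "topspace X = {}"
      by (rule baire_countable_closed_discrete_cover_empty[OF assms(3,4) _ F(2) cd])
    then show ?thesis using closure_of_subset_topspace[of X A] by auto
  next
    case False
    have "D \<inter> X closure_of A \<lesssim> K" if "D \<in> \<F>" for D
    proof (rule closed_discrete_in_closure_lepoll[OF assms(1)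
          uncountable_imp_omega1_ordLeq[OF False] assms(5,7,8)])
      have "closedin X D" using cd[OF that] by (simp add: closed_discrete_in_def)
      then show "closed_discrete_in X (D \<inter> X closure_of A)"
        by (intro closed_discrete_in_subset[OF cd[OF that]] closedin_Int closedin_closure_of)
          auto
    qed (rule inf_le2)
    moreover have "X closure_of A \<subseteq> \<Union>\<F>"
      using F(2) closure_of_subset_topspace by simp
    ultimately show ?thesis using lepoll_by_small_traces[OF assms(1) F(1)] by blast
  qed
qed

end
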